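(* Let $\overrightarrow{G}$ be a digraph of order $n$ with no weakly connected components of order less than $4$. Then $\overrightarrow{G}$ has a $\Gamma$-irregular labeling for every finite Abelian group $\Gamma$ such that $|\Gamma|\ge 2n+1$.
   Context: For a digraph $\overrightarrow{G}=(V,A)$ and a finite Abelian group $\Gamma$, a labeling $\psi\colon A\to\Gamma$ is $\Gamma$-irregular if the map $\varphi_\psi\colon V\to\Gamma$, $\varphi_\psi(x)=\sum_{y\in N^-(x)}\psi((y,x))-\sum_{y\in N^+(x)}\psi((x,y))$, is injective (here $N^-(x)$ and $N^+(x)$ are the in- and out-neighbourhoods of $x$). A weakly connected component of $\overrightarrow{G}$ is the subdigraph induced by the vertex set of a connected component of the underlying undirected graph of $\overrightarrow{G}$. *)

theory Defs
  imports Main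
begin

definition digraph :: "'a set \<Rightarrow> ('a \<times> 'a) set \<Rightarrow> bool" where
  "digraph V A \<longleftrightarrow> finite V \<and> A \<subseteq> V \<times> V \<and> (\<forall>x. (x, x) \<notin> A)"

definition in_nbhd :: "('a \<times> 'a) set \<Rightarrow> 'a \<Rightarrow> 'a set" where
  "in_nbhd A x = {y. (y, x) \<in> A}"

definition out_nbhd :: "('a \<times> 'a) set \<Rightarrow> 'a \<Rightarrow> 'a set" where
  "out_nbhd A x = {y. (x, y) \<in> A}"

definition weighted_deg :: "('a \<times> 'a) set \<Rightarrow> ('a \<times> 'a \<Rightarrow> 'g::ab_group_add) \<Rightarrow> 'a \<Rightarrow> 'g" where
  "weighted_deg A \<psi> x =
     (\<Sum>y\<in>in_nbhd A x. \<psi> (y, x)) - (\<Sum>y\<in>out_nbhd A x. \<psi> (x, y))"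

definition group_irregular :: "'a set \<Rightarrow> ('a \<times> 'a) set \<Rightarrow> ('a \<times> 'a \<Rightarrow> 'g::ab_group_add) \<Rightarrow> bool" where
  "group_irregular V A \<psi> \<longleftrightarrow> inj_on (weighted_deg A \<psi>) V"

definition weak_component :: "'a set \<Rightarrow> ('a \<times> 'a) set \<Rightarrow> 'a \<Rightarrow> 'a set" where
  "weak_component V A x = {y \<in> V. (x, y) \<in> (A \<union> A\<inverse>)\<^sup>*}"

end

theory Submission
  imports Defs
begin

text \<open>A vertex function that sums to zero over every weak component is the weighted degree
  function of some labeling: a label g on an arc (a, b) moves weight g from a to b, so along an
  undirected path any weight can be moved between two vertices of a component, and a zero-sum
  distribution is a superposition of such moves from a common root. It therefore suffices to
  find an injective vertex function with zero sum on every component. The components are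
  treated one after another: all but three vertices receive arbitrary unused values, and the
  last three receive distinct unused values x, y, z with the required sum. Averaging over z the
  number of solutions of x + x = c - z gives a z with at most four of them, after which x is
  chosen outside a set of at most 2|W| + 6 values, W the set of forbidden values. Components of
  order 3 already suffice for this argument.\<close>

definition dipole :: "'a \<Rightarrow> 'a \<Rightarrow> 'g::ab_group_add \<Rightarrow> 'a \<Rightarrow> 'g" where
  "dipole a b g v = (if v = b then g else 0) - (if v = a then g else 0)"

definition realizable :: "('a \<times> 'a) set \<Rightarrow> ('a \<Rightarrow> 'g::ab_group_add) \<Rightarrow> bool" where
  "realizable A f \<longleftrightarrow> (\<exists>\<psi>. weighted_deg A \<psi> = f)"

lemma weighted_deg_add:
  "weighted_deg A (\<lambda>e. \<psi> e + \<phi> e) v = weighted_deg A \<psi> v + weighted_deg A \<phi> v"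
  by (simp add: weighted_deg_def sum.distrib algebra_simps)

lemma realizable_zero: "realizable A (\<lambda>v. 0)"
  unfolding realizable_def by (rule exI[of _ "\<lambda>e. 0"]) (simp add: weighted_deg_def fun_eq_iff)

lemma realizable_add:
  assumes "realizable A f" "realizable A h"
  shows "realizable A (\<lambda>v. f v + h v)"
proof -
  obtain \<psi> \<phi> where "weighted_deg A \<psi> = f" "weighted_deg A \<phi> = h"
    using assms unfolding realizable_def by blast
  then show ?thesis
    unfolding realizable_def by (intro exI[of _ "\<lambda>e. \<psi> e + \<phi> e"]) (auto simp: weighted_deg_add)
qed

lemma realizable_sum:
  assumes "finite I" "\<forall>i\<in>I. realizable A (F i)"
  shows "realizable A (\<lambda>v. \<Sum>i\<in>I. F i v)"
  using assms by (induction I rule: finite_induct) (auto intro: realizable_zero realizable_add)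

lemma finite_in_nbhd: "finite A \<Longrightarrow> finite (in_nbhd A v)"
  unfolding in_nbhd_def by (rule finite_subset[of _ "fst ` A"]) force+

lemma finite_out_nbhd: "finite A \<Longrightarrow> finite (out_nbhd A v)"
  unfolding out_nbhd_def by (rule finite_subset[of _ "snd ` A"]) force+

lemma weighted_deg_single_arc:
  assumes "finite A" "(a, b) \<in> A"
  shows "weighted_deg A (\<lambda>e. if e = (a, b) then g else 0) = dipole a b g"
proof
  fix v
  have "(\<Sum>y\<in>in_nbhd A v. if (y, v) = (a, b) then g else 0) = (if v = b then g else 0)"
    using finite_in_nbhd[OF assms(1)] assms(2) by (simp add: in_nbhd_def)
  moreover have "(\<Sum>y\<in>out_nbhd A v. if (v, y) = (a, b) then g else 0) = (if v = a then g else 0)"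
    using finite_out_nbhd[OF assms(1)] assms(2) by (simp add: out_nbhd_def)
  ultimately show "weighted_deg A (\<lambda>e. if e = (a, b) then g else 0) v = dipole a b g v"
    by (simp add: weighted_deg_def dipole_def)
qed

lemma dipole_trans: "dipole a b g v + dipole b c g v = dipole a c g v"
  by (simp add: dipole_def)

lemma dipole_converse: "dipole b a (- g) = dipole a b g"
  by (auto simp: dipole_def fun_eq_iff)

lemma realizable_dipole:
  assumes "finite A" "(a, b) \<in> (A \<union> A\<inverse>)\<^sup>*"
  shows "realizable A (dipole a b g)"
  using assms(2)
proof (induction rule: rtrancl_induct)
  case base
  show ?case using realizable_zero by (simp add: dipole_def)
next
  case (step b c)
  have "realizable A (dipole b c g)"
  proof (cases "(b, c) \<in> A")
    case True
    then show ?thesis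
      using weighted_deg_single_arc[OF assms(1)] unfolding realizable_def by blast
  next
    case False
    then have "(c, b) \<in> A" using step.hyps(2) by blast
    then show ?thesis
      using weighted_deg_single_arc[OF assms(1)] dipole_converse unfolding realizable_def by metis
  qed
  from realizable_add[OF step.IH this] show ?case
    by (simp add: dipole_trans)
qed

lemma realizable_restrict_zero_sum:
  assumes "finite A" "finite C" "\<forall>v\<in>C. (x, v) \<in> (A \<union> A\<inverse>)\<^sup>*" "sum f C = 0"
  shows "realizable A (\<lambda>w. if w \<in> C then f w else 0)"
proof -
  have "(\<Sum>v\<in>C. dipole x v (f v) w) = (if w \<in> C then f w else 0)" for w
    using assms(2,4) by (cases "w = x") (simp_all add: dipole_def sum_subtractf)
  moreover have "realizable A (\<lambda>w. \<Sum>v\<in>C. dipole x v (f v) w)"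
    using assms(1-3) by (simp add: realizable_sum realizable_dipole)
  ultimately show ?thesis by simp
qed

definition weak_components :: "'a set \<Rightarrow> ('a \<times> 'a) set \<Rightarrow> 'a set set" where
  "weak_components V A = weak_component V A ` V"

lemma weak_component_subset: "weak_component V A x \<subseteq> V"
  by (auto simp: weak_component_def)

lemma finite_weak_component: "finite V \<Longrightarrow> finite (weak_component V A x)"
  using weak_component_subset by (rule finite_subset)

lemma weak_component_self: "x \<in> V \<Longrightarrow> x \<in> weak_component V A x"
  by (simp add: weak_component_def)

lemma weak_component_eq:
  assumes "y \<in> weak_component V A x"
  shows "weak_component V A y = weak_component V A x"
proof -
  have "sym ((A \<union> A\<inverse>)\<^sup>*)" by (intro sym_rtrancl sym_Un_converse)
  then have "(y, x) \<in> (A \<union> A\<inverse>)\<^sup>*"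
    using assms unfolding weak_component_def by (auto dest: symD)
  then show ?thesis
    using assms unfolding weak_component_def by (auto intro: rtrancl_trans)
qed

lemma finite_weak_components: "finite V \<Longrightarrow> finite (weak_components V A)"
  by (simp add: weak_components_def)

lemma Union_weak_components: "\<Union> (weak_components V A) = V"
  unfolding weak_components_def weak_component_def by auto

lemma pairwise_disjnt_weak_components: "pairwise disjnt (weak_components V A)"
  unfolding weak_components_def pairwise_def disjnt_def
  by (auto dest: weak_component_eq)

lemma realizable_if_zero_sum_on_weak_components:
  assumes "finite V" "finite A" "\<forall>C\<in>weak_components V A. sum f C = 0"
  shows "\<exists>\<psi>. \<forall>v\<in>V. weighted_deg A \<psi> v = f v"
proof -
  have fin: "finite (weak_components V A)"
    using assms(1) by (rule finite_weak_components)
  have "realizable A (\<lambda>w. \<Sum>C\<in>weak_components V A. if w \<in> C then f w else 0)"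
  proof (intro realizable_sum ballI)
    fix C assume "C \<in> weak_components V A"
    then obtain x where C: "C = weak_component V A x"
      unfolding weak_components_def by blast
    then have "finite C"
      using assms(1) by (simp add: finite_weak_component)
    moreover have "\<forall>v\<in>C. (x, v) \<in> (A \<union> A\<inverse>)\<^sup>*"
      unfolding C weak_component_def by simp
    ultimately show "realizable A (\<lambda>w. if w \<in> C then f w else 0)"
      using assms(2,3) \<open>C \<in> weak_components V A\<close> by (simp add: realizable_restrict_zero_sum)
  qed (fact fin)
  moreover have "(\<Sum>C\<in>weak_components V A. if v \<in> C then f v else 0) = f v" if "v \<in> V" for v
  proof -
    have "{C \<in> weak_components V A. v \<in> C} = {weak_component V A v}"
    proof (intro equalityI subsetI)
      fix C assume "C \<in> {C \<in> weak_components V A. v \<in> C}"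
      then show "C \<in> {weak_component V A v}"
        unfolding weak_components_def by (auto dest: weak_component_eq)
    qed (use that weak_component_self in \<open>auto simp: weak_components_def\<close>)
    then show ?thesis
      using fin by (simp flip: sum.inter_filter)
  qed
  ultimately show ?thesis unfolding realizable_def by metis
qed

lemma exists_small_fiber:
  assumes "finite A" "finite B" "B \<noteq> {}"
  shows "\<exists>y\<in>B. card (f -` {y} \<inter> A) * card B \<le> card A"
proof (rule ccontr)
  assume "\<not> ?thesis"
  then have "(\<Sum>y\<in>B. card A) < (\<Sum>y\<in>B. card (f -` {y} \<inter> A) * card B)"
    using assms(2,3) by (intro sum_strict_mono) auto
  also have "\<dots> = card (\<Union>y\<in>B. f -` {y} \<inter> A) * card B"
    using assms(1,2) by (subst card_UN_disjoint) (auto simp: sum_distrib_right)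
  also have "\<dots> \<le> card A * card B"
    using assms(1) by (intro mult_right_mono card_mono) auto
  finally show False by simp
qed

lemma exists_distinct_triple_sum_avoiding:
  fixes W :: "'g::{finite,ab_group_add} set" and c :: 'g
  assumes "2 * card W + 7 \<le> card (UNIV :: 'g set)"
  shows "\<exists>x y z. x \<notin> W \<and> y \<notin> W \<and> z \<notin> W \<and> x \<noteq> y \<and> x \<noteq> z \<and> y \<noteq> z \<and> x + y + z = c"
proof -
  let ?N = "card (UNIV :: 'g set)" and ?halves = "\<lambda>z. {x. x + x = c - z}"
  have compl: "card (- W) = ?N - card W"
    by (simp add: Compl_eq_Diff_UNIV card_Diff_subset)
  with assms have "- W \<noteq> {}" by auto
  moreover have "?halves z = (\<lambda>x. c - (x + x)) -` {z} \<inter> UNIV" for z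
    by auto
  ultimately obtain z where z: "z \<notin> W" "card (?halves z) * card (- W) \<le> ?N"
    using exists_small_fiber[of UNIV "- W" "\<lambda>x. c - (x + x)"] by auto
  have "card (?halves z) \<le> 4"
  proof (rule ccontr)
    assume "\<not> ?thesis"
    then have "5 * card (- W) \<le> card (?halves z) * card (- W)"
      by (intro mult_le_mono1) simp
    then have "5 * card (- W) \<le> ?N"
      using z(2) by linarith
    then show False using assms compl by linarith
  qed
  let ?partner = "\<lambda>w. c - z - w"
  define B where "B = insert z W \<union> ?partner ` insert z W \<union> ?halves z"
  have "card B \<le> card (insert z W) + card (?partner ` insert z W) + card (?halves z)"
    unfolding B_def by (meson card_Un_le add_le_mono order_trans le_refl)
  also have "\<dots> \<le> 2 * card (insert z W) + 4"
    using card_image_le[of "insert z W" ?partner] \<open>card (?halves z) \<le> 4\<close> by simp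
  also have "\<dots> < ?N"
    using assms card_insert_le_m1 by (simp add: card_insert_if)
  finally obtain x where x: "x \<notin> B"
    by (metis UNIV_I card_mono finite subsetI leD)
  define y where "y = ?partner x"
  have "x \<noteq> y"
    using x unfolding B_def y_def by (auto simp: algebra_simps)
  moreover have "y \<notin> insert z W"
  proof
    assume "y \<in> insert z W"
    then have "x \<in> ?partner ` insert z W"
      by (rule rev_image_eqI) (simp add: y_def)
    with x show False unfolding B_def by blast
  qed
  moreover have "x \<notin> insert z W" "x + y + z = c"
    using x unfolding B_def y_def by auto
  ultimately show ?thesis
    using z(1) by blast
qed

lemma exists_inj_sum_avoiding:
  fixes U :: "'g::{finite,ab_group_add} set" and c :: 'g
  assumes "finite C" "3 \<le> card C" "2 * (card U + card C) + 1 \<le> card (UNIV :: 'g set)"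
  shows "\<exists>g. inj_on g C \<and> g ` C \<inter> U = {} \<and> sum g C = c"
proof -
  obtain D where D: "D \<subseteq> C" "card D = 3"
    using obtain_subset_with_card_n[OF assms(2)] by metis
  then obtain a b d where abd: "D = {a, b, d}" "a \<noteq> b" "b \<noteq> d" "a \<noteq> d"
    unfolding card_3_iff by blast
  define C' where "C' = C - D"
  have fin: "finite C'" "finite D" using assms(1) D(1) by (auto simp: C'_def intro: finite_subset)
  have "card C' = card C - 3" using D fin(2) by (simp add: C'_def card_Diff_subset)
  then have "card C' \<le> card (- U)"
    using assms(3) by (simp add: Compl_eq_Diff_UNIV card_Diff_subset)
  then obtain g0 where g0: "g0 ` C' \<subseteq> - U" "inj_on g0 C'"
    using card_le_inj[OF fin(1) finite[of "- U"]] by blast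
  define W where "W = U \<union> g0 ` C'"
  have "card W \<le> card U + card C'"
    unfolding W_def using card_Un_le[of U "g0 ` C'"] card_image_le[OF fin(1), of g0] by linarith
  then have "2 * card W + 7 \<le> card (UNIV :: 'g set)"
    using assms(2,3) \<open>card C' = _\<close> by arith
  then obtain x y z where xyz: "x \<notin> W" "y \<notin> W" "z \<notin> W" "x \<noteq> y" "x \<noteq> z" "y \<noteq> z"
    "x + y + z = c - sum g0 C'"
    using exists_distinct_triple_sum_avoiding by blast
  define g where "g = g0(a := x, b := y, d := z)"
  have on_C': "g v = g0 v" if "v \<in> C'" for v
    using that abd(1) unfolding C'_def g_def by auto
  have C: "C = D \<union> C'" "D \<inter> C' = {}" using D(1) by (auto simp: C'_def)
  have image_D: "g ` D = {x, y, z}" using abd unfolding g_def by auto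
  have image_C': "g ` C' = g0 ` C'" using on_C' by simp
  have "inj_on g D"
    using abd xyz unfolding g_def by (auto simp: inj_on_def)
  moreover have "inj_on g C'"
    using g0(2) on_C' by (simp cong: inj_on_cong)
  moreover have "g ` D \<inter> g ` C' = {}"
    using xyz unfolding image_D image_C' W_def by blast
  ultimately have "inj_on g C"
    unfolding C(1) inj_on_Un by blast
  moreover have "g ` C \<inter> U = {}"
    using xyz g0(1) unfolding C(1) image_Un image_D image_C' W_def by blast
  moreover have "sum g C = c"
  proof -
    have "sum g C = sum g D + sum g0 C'"
      using fin C sum.cong[OF refl on_C'] by (simp add: sum.union_disjoint)
    also have "sum g D = x + y + z"
      using abd unfolding g_def by (simp add: algebra_simps)
    finally show ?thesis using xyz(7) by (simp add: algebra_simps)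
  qed
  ultimately show ?thesis by blast
qed

lemma exists_inj_zero_sums_on_blocks:
  fixes \<P> :: "'a set set"
  assumes "finite \<P>" "\<forall>C\<in>\<P>. finite C \<and> 3 \<le> card C" "pairwise disjnt \<P>"
    and "2 * card (\<Union>\<P>) + 1 \<le> card (UNIV :: 'g set)"
  shows "\<exists>f :: 'a \<Rightarrow> 'g::{finite,ab_group_add}. inj_on f (\<Union>\<P>) \<and> (\<forall>C\<in>\<P>. sum f C = 0)"
  using assms
proof (induction \<P> rule: finite_induct)
  case empty
  show ?case by simp
next
  case (insert C \<P>)
  have fin: "finite C" "finite (\<Union>\<P>)"
    using insert.hyps(1) insert.prems(1) by auto
  have disj: "C \<inter> \<Union>\<P> = {}"
    using insert.hyps(2) insert.prems(2) by (auto simp: pairwise_insert disjnt_def)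
  have card: "card (\<Union>(insert C \<P>)) = card C + card (\<Union>\<P>)"
    using fin disj by (simp add: card_Un_disjoint)
  obtain f :: "'a \<Rightarrow> 'g" where f: "inj_on f (\<Union>\<P>)" "\<forall>D\<in>\<P>. sum f D = 0"
    using insert.IH insert.prems card by (auto simp: pairwise_insert)
  have "2 * (card (f ` \<Union>\<P>) + card C) + 1 \<le> card (UNIV :: 'g set)"
    using insert.prems(3) card card_image_le[OF fin(2), of f] by (simp add: algebra_simps)
  then obtain g where g: "inj_on g C" "g ` C \<inter> f ` \<Union>\<P> = {}" "sum g C = 0"
    using exists_inj_sum_avoiding[OF fin(1)] insert.prems(1) by blast
  define h where "h v = (if v \<in> C then g v else f v)" for v
  have on_C: "h v = g v" if "v \<in> C" for v
    using that by (simp add: h_def)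
  have on_rest: "h v = f v" if "v \<in> \<Union>\<P>" for v
    using that disj by (auto simp: h_def)
  have "h ` C = g ` C" "h ` \<Union>\<P> = f ` \<Union>\<P>"
    using on_C on_rest by simp_all
  moreover have "inj_on h C" "inj_on h (\<Union>\<P>)"
    using inj_on_cong[of C h g] inj_on_cong[of "\<Union>\<P>" h f] g(1) f(1) on_C on_rest by simp_all
  ultimately have "inj_on h (C \<union> \<Union>\<P>)"
    using g(2) disj by (simp add: inj_on_Un Diff_triv Int_commute)
  moreover have "sum h D = 0" if "D \<in> insert C \<P>" for D
  proof (cases "D = C")
    case True
    then show ?thesis using g(3) by (simp cong: sum.cong add: on_C)
  next
    case False
    then have "D \<in> \<P>" "D \<subseteq> \<Union>\<P>" using that by auto
    then have "sum h D = sum f D"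
      using on_rest by (intro sum.cong) auto
    with \<open>D \<in> \<P>\<close> show ?thesis using f(2) by simp
  qed
  ultimately show ?case by auto
qed

theorem corollary4p5:
  fixes V :: "'a set" and A :: "('a \<times> 'a) set"
  assumes "digraph V A"
    and "\<forall>x\<in>V. card (weak_component V A x) \<ge> 4"
    and "card (UNIV :: 'g set) \<ge> 2 * card V + 1"
  shows "\<exists>\<psi> :: 'a \<times> 'a \<Rightarrow> 'g::{finite, ab_group_add}. group_irregular V A \<psi>"
proof -
  have "finite V" "finite A"
    using assms(1) finite_subset[of A "V \<times> V"] by (auto simp: digraph_def)
  have "\<forall>C\<in>weak_components V A. finite C \<and> 3 \<le> card C"
    using assms(2) \<open>finite V\<close> by (fastforce simp: weak_components_def finite_weak_component)
  then obtain f :: "'a \<Rightarrow> 'g" where f: "inj_on f V" "\<forall>C\<in>weak_components V A. sum f C = 0"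
    using exists_inj_zero_sums_on_blocks[of "weak_components V A"] assms(3) \<open>finite V\<close>
      finite_weak_components pairwise_disjnt_weak_components Union_weak_components by metis
  then obtain \<psi> where "\<forall>v\<in>V. weighted_deg A \<psi> v = f v"
    using realizable_if_zero_sum_on_weak_components \<open>finite V\<close> \<open>finite A\<close> by blast
  then have "group_irregular V A \<psi>"
    using inj_on_cong[of V "weighted_deg A \<psi>" f] f(1) unfolding group_irregular_def by simp
  then show ?thesis by blast
qed

end
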